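(* Let $\sigma\in\mathcal{OR}_n$, and let $\mathcal L,\mathcal R,\mathcal H,\mathcal J,\mathcal D$ denote Green's relations on the monoid $\mathcal{OR}_n$. Then (i) $\mathcal L(\sigma)=\{\tau\in\mathcal{OR}_n: I(\tau)=I(\sigma)\}$; (ii) $\mathcal R(\sigma)=\{\tau\in\mathcal{OR}_n: J(\tau)=J(\sigma)\}$; (iii) $\mathcal H(\sigma)=\{\tau\in\mathcal{OR}_n: I(\tau)=I(\sigma)\text{ and } J(\tau)=J(\sigma)\}$; (iv) $\mathcal J(\sigma)=\{\tau\in\mathcal{OR}_n:\mathrm{rk}(\tau)=\mathrm{rk}(\sigma), \text{ and } \mathrm{tp}(\tau)=\mathrm{tp}(\sigma)\text{ if }\mathrm{rk}(\sigma)=m\}$; (v) $\mathcal D(\sigma)=\mathcal J(\sigma)$.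
   Context: Let $m\ge 1$, $n=2m$, $\mathbf n=\{1,\dots,n\}$, $\theta(i)=n+1-i$, written $\bar i$. A proper subset $I\subset\mathbf n$ is admissible if $I\cap\theta(I)=\emptyset$; $\mathbf n$ and $\emptyset$ are also admissible. For an injective partial map $\sigma$ of $\mathbf n$, $I(\sigma)$ is its domain, $J(\sigma)$ its image, $\mathrm{rk}(\sigma)=|I(\sigma)|$; products are compositions of partial maps. $W=\{\sigma\in S_n:\sigma(\bar i)=\overline{\sigma(i)}\ \forall i\}$, $W'=\{\sigma\in W:|\sigma(\{1,\dots,m\})\cap\{m+1,\dots,n\}|\text{ even}\}$. An admissible $m$-subset is of type I if it contains an even number of elements $>m$, type II otherwise. $\mathcal{OR}_n$ consists of the injective partial maps $\sigma$ with: $\mathrm{rk}(\sigma)<m$ and $I(\sigma),J(\sigma)$ admissible; or $\mathrm{rk}(\sigma)=m$ and $I(\sigma),J(\sigma)$ admissible of the same type; or $\sigma\in W'$. For $\mathrm{rk}(\sigma)=m$, $\mathrm{tp}(\sigma)$ is the type of $I(\sigma)$. For a Green relation $\mathcal K$, $\mathcal K(\sigma)$ denotes the class of $\sigma$. *)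

theory Defs
  imports Main
begin

text \<open>The product sigma tau is the composition sigma \<circ>m tau (apply tau first), so that
  the domain of a left multiple rho sigma is contained in the domain of sigma.\<close>

definition theta :: "nat \<Rightarrow> nat \<Rightarrow> nat" where
  "theta n i = n + 1 - i"

definition admissible :: "nat \<Rightarrow> nat set \<Rightarrow> bool" where
  "admissible n I \<longleftrightarrow> I \<subseteq> {1..n} \<and> (I = {1..n} \<or> I \<inter> theta n ` I = {})"

definition pinj :: "nat \<Rightarrow> (nat \<rightharpoonup> nat) \<Rightarrow> bool" where
  "pinj n \<sigma> \<longleftrightarrow> dom \<sigma> \<subseteq> {1..n} \<and> ran \<sigma> \<subseteq> {1..n} \<and> inj_on \<sigma> (dom \<sigma>)"

definition Idom :: "(nat \<rightharpoonup> nat) \<Rightarrow> nat set" where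
  "Idom \<sigma> = dom \<sigma>"

definition Jim :: "(nat \<rightharpoonup> nat) \<Rightarrow> nat set" where
  "Jim \<sigma> = ran \<sigma>"

definition rk :: "(nat \<rightharpoonup> nat) \<Rightarrow> nat" where
  "rk \<sigma> = card (dom \<sigma>)"

definition Wgrp :: "nat \<Rightarrow> (nat \<rightharpoonup> nat) set" where
  "Wgrp n = {\<sigma>. pinj n \<sigma> \<and> dom \<sigma> = {1..n} \<and> ran \<sigma> = {1..n} \<and>
     (\<forall>i\<in>{1..n}. \<sigma> (theta n i) = map_option (theta n) (\<sigma> i))}"

definition Wprime :: "nat \<Rightarrow> (nat \<rightharpoonup> nat) set" where
  "Wprime n = {\<sigma> \<in> Wgrp n.
     even (card ((\<lambda>i. the (\<sigma> i)) ` {1..n div 2} \<inter> {n div 2 + 1..n}))}"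

definition typeI :: "nat \<Rightarrow> nat set \<Rightarrow> bool" where
  "typeI n I \<longleftrightarrow> even (card {x \<in> I. x > n div 2})"

definition tp :: "nat \<Rightarrow> (nat \<rightharpoonup> nat) \<Rightarrow> bool" where
  "tp n \<sigma> = typeI n (Idom \<sigma>)"

definition ORn :: "nat \<Rightarrow> (nat \<rightharpoonup> nat) set" where
  "ORn n = {\<sigma>. pinj n \<sigma> \<and>
     ((rk \<sigma> < n div 2 \<and> admissible n (Idom \<sigma>) \<and> admissible n (Jim \<sigma>))
      \<or> (rk \<sigma> = n div 2 \<and> admissible n (Idom \<sigma>) \<and> admissible n (Jim \<sigma>)
           \<and> (typeI n (Idom \<sigma>) \<longleftrightarrow> typeI n (Jim \<sigma>)))
      \<or> \<sigma> \<in> Wprime n)}"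

definition greenL :: "'a set \<Rightarrow> ('a \<Rightarrow> 'a \<Rightarrow> 'a) \<Rightarrow> 'a \<Rightarrow> 'a \<Rightarrow> bool" where
  "greenL M mult x y \<longleftrightarrow> x \<in> M \<and> y \<in> M \<and>
     (\<exists>a\<in>M. \<exists>b\<in>M. x = mult a y \<and> y = mult b x)"

definition greenR :: "'a set \<Rightarrow> ('a \<Rightarrow> 'a \<Rightarrow> 'a) \<Rightarrow> 'a \<Rightarrow> 'a \<Rightarrow> bool" where
  "greenR M mult x y \<longleftrightarrow> x \<in> M \<and> y \<in> M \<and>
     (\<exists>a\<in>M. \<exists>b\<in>M. x = mult y a \<and> y = mult x b)"

definition greenH :: "'a set \<Rightarrow> ('a \<Rightarrow> 'a \<Rightarrow> 'a) \<Rightarrow> 'a \<Rightarrow> 'a \<Rightarrow> bool" where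
  "greenH M mult x y \<longleftrightarrow> greenL M mult x y \<and> greenR M mult x y"

definition greenJ :: "'a set \<Rightarrow> ('a \<Rightarrow> 'a \<Rightarrow> 'a) \<Rightarrow> 'a \<Rightarrow> 'a \<Rightarrow> bool" where
  "greenJ M mult x y \<longleftrightarrow> x \<in> M \<and> y \<in> M \<and>
     (\<exists>a\<in>M. \<exists>b\<in>M. \<exists>c\<in>M. \<exists>d\<in>M. x = mult (mult a y) b \<and> y = mult (mult c x) d)"

definition greenD :: "'a set \<Rightarrow> ('a \<Rightarrow> 'a \<Rightarrow> 'a) \<Rightarrow> 'a \<Rightarrow> 'a \<Rightarrow> bool" where
  "greenD M mult x y \<longleftrightarrow> (\<exists>z. greenL M mult x z \<and> greenR M mult z y)"

definition green_class :: "('a \<Rightarrow> 'a \<Rightarrow> bool) \<Rightarrow> 'a \<Rightarrow> 'a set" where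
  "green_class K x = {y. K y x}"

end

theory Submission
  imports Defs
begin

text \<open>Left multiples of a partial injection have smaller domains and right multiples smaller
  images; conversely, two elements \<open>\<tau>, \<sigma>\<close> of \<open>OR\<^sub>n\<close> with the same domain (image) are
  related through \<open>\<tau> \<sigma>\<^sup>-\<^sup>1\<close> (\<open>\<sigma>\<^sup>-\<^sup>1 \<tau>\<close>), which lies in \<open>OR\<^sub>n\<close> because \<open>W'\<close> is a group.

  The type of an admissible \<open>m\<close>-set \<open>I\<close> is the sign \<open>\<Prod>x\<in>I. \<plusminus>1\<close> (\<open>-1\<close> exactly for
  \<open>x > m\<close>). For \<open>w \<in> W\<close> the product of the signs of \<open>w x\<close> and \<open>x\<close> is constant on each pair
  \<open>{x, \<theta> x}\<close>, and an admissible \<open>m\<close>-set contains exactly one element of each pair, so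
  \<open>w\<close> multiplies the type of every admissible \<open>m\<close>-set by the type of \<open>w {1..m}\<close>, which is
  \<open>+1\<close> on \<open>W'\<close>. Hence in any factorisation \<open>\<tau> = a \<sigma> b\<close> at rank \<open>m\<close>, the factor \<open>b\<close>
  maps \<open>I(\<tau>)\<close> onto \<open>I(\<sigma>)\<close> preserving the type: \<open>\<J>\<close> preserves rank and type.
  Conversely, equal rank and type yield \<open>z \<in> OR\<^sub>n\<close> with the domain of \<open>\<tau>\<close> and the image
  of \<open>\<sigma>\<close>, so \<open>\<tau> \<L> z \<R> \<sigma>\<close>; together with \<open>\<D> \<subseteq> \<J>\<close> this gives \<open>\<D> = \<J>\<close>.\<close>

lemma theta_in: "i \<in> {1..n} \<Longrightarrow> theta n i \<in> {1..n}"
  by (auto simp: theta_def)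

lemma theta_theta: "i \<in> {1..n} \<Longrightarrow> theta n (theta n i) = i"
  by (auto simp: theta_def)

definition upper_sign :: "nat \<Rightarrow> nat \<Rightarrow> int" where
  "upper_sign m x = (if m < x then -1 else 1)"

definition upper_parity :: "nat \<Rightarrow> nat set \<Rightarrow> int" where
  "upper_parity m A = (\<Prod>x\<in>A. upper_sign m x)"

lemma upper_sign_theta: "x \<in> {1..2*m} \<Longrightarrow> upper_sign m (theta (2*m) x) = - upper_sign m x"
  by (auto simp: upper_sign_def theta_def)

lemma upper_parity_lower_half [simp]: "upper_parity m {1..m} = 1"
  by (simp add: upper_parity_def upper_sign_def)

lemma upper_parity_eq_1_iff:
  assumes "finite A"
  shows "upper_parity m A = 1 \<longleftrightarrow> even (card {x\<in>A. m < x})"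
proof -
  have "upper_parity m A = (\<Prod>x\<in>{x\<in>A. m < x}. -1)"
    unfolding upper_parity_def upper_sign_def by (rule prod.inter_filter[OF assms, symmetric])
  then show ?thesis by (simp add: minus_one_power_iff)
qed

lemma typeI_iff_upper_parity: "finite I \<Longrightarrow> typeI (2*m) I \<longleftrightarrow> upper_parity m I = 1"
  by (simp add: typeI_def upper_parity_eq_1_iff)

definition transversal :: "nat \<Rightarrow> nat set \<Rightarrow> bool" where
  "transversal m I \<longleftrightarrow> I \<subseteq> {1..2*m} \<and> I \<inter> theta (2*m) ` I = {} \<and> card I = m"

lemma transversal_lower_half: "transversal m {1..m}"
  by (auto simp: transversal_def theta_def)

lemma admissible_transversal:
  assumes "admissible (2*m) I" "card I = m"
  shows "transversal m I"
proof (cases "I = {1..2*m}")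
  case True
  then have "I = {}" using assms(2) by simp
  then show ?thesis using assms(2) by (simp add: transversal_def)
next
  case False
  then show ?thesis using assms by (simp add: admissible_def transversal_def)
qed

text \<open>Folding each pair \<open>{x, theta x}\<close> onto its smaller element maps any transversal
  bijectively onto \<open>{1..m}\<close>.\<close>
lemma prod_transversal:
  fixes g :: "nat \<Rightarrow> 'a::comm_monoid_mult"
  assumes g: "\<And>x. x \<in> {1..2*m} \<Longrightarrow> g (theta (2*m) x) = g x" and I: "transversal m I"
  shows "prod g I = prod g {1..m}"
proof -
  define low where "low x = min x (theta (2*m) x)" for x
  have I_sub: "I \<subseteq> {1..2*m}" and I_disj: "I \<inter> theta (2*m) ` I = {}" and I_card: "card I = m"
    using I by (auto simp: transversal_def)
  have inj: "inj_on low I"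
  proof (rule inj_onI)
    fix x y assume xy: "x \<in> I" "y \<in> I" "low x = low y"
    have "x = y \<or> x = theta (2*m) y \<or> theta (2*m) x = y \<or> theta (2*m) x = theta (2*m) y"
      using xy(3) by (auto simp: low_def min_def split: if_splits)
    moreover have "x \<noteq> theta (2*m) y" "theta (2*m) x \<noteq> y" using xy I_disj by blast+
    moreover have "x \<in> {1..2*m}" "y \<in> {1..2*m}" using xy I_sub by auto
    ultimately show "x = y" by (metis theta_theta)
  qed
  have "low ` I = {1..m}"
  proof (rule card_subset_eq)
    have "low x \<in> {1..m}" if "x \<in> {1..2*m}" for x
      using that by (auto simp: low_def theta_def)
    then show "low ` I \<subseteq> {1..m}" using I_sub by blast
    show "card (low ` I) = card {1..m}" using card_image[OF inj] I_card by simp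
  qed simp
  then have "prod g {1..m} = prod (g \<circ> low) I" using prod.reindex[OF inj] by simp
  also have "\<dots> = prod g I"
  proof (rule prod.cong)
    fix x assume "x \<in> I"
    then show "(g \<circ> low) x = g x" using g[of x] I_sub by (auto simp: low_def min_def)
  qed simp
  finally show ?thesis by simp
qed

definition signed_perm :: "nat \<Rightarrow> (nat \<Rightarrow> nat) \<Rightarrow> bool" where
  "signed_perm n f \<longleftrightarrow> bij_betw f {1..n} {1..n} \<and> (\<forall>i\<in>{1..n}. f (theta n i) = theta n (f i))"

lemma signed_perm_comp:
  assumes f: "signed_perm n f" and g: "signed_perm n g"
  shows "signed_perm n (f \<circ> g)"
proof -
  have f_bij: "bij_betw f {1..n} {1..n}" and g_bij: "bij_betw g {1..n} {1..n}"
    using f g by (simp_all add: signed_perm_def)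
  have "(f \<circ> g) (theta n i) = theta n ((f \<circ> g) i)" if "i \<in> {1..n}" for i
    using that f g bij_betwE[OF g_bij] by (simp add: signed_perm_def)
  then show ?thesis
    using bij_betw_trans[OF g_bij f_bij] by (simp add: signed_perm_def)
qed

lemma signed_perm_inv:
  assumes f: "signed_perm n f"
  shows "signed_perm n (the_inv_into {1..n} f)"
proof -
  let ?g = "the_inv_into {1..n} f"
  have bij: "bij_betw f {1..n} {1..n}" using f by (simp add: signed_perm_def)
  have g_bij: "bij_betw ?g {1..n} {1..n}" using bij by (rule bij_betw_the_inv_into)
  have "?g (theta n j) = theta n (?g j)" if j: "j \<in> {1..n}" for j
  proof -
    have gj: "?g j \<in> {1..n}" using bij_betwE[OF g_bij] j by blast
    have "f (theta n (?g j)) = theta n (f (?g j))" using f gj by (simp add: signed_perm_def)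
    also have "f (?g j) = j" using f_the_inv_into_f_bij_betw[OF bij] j by blast
    finally have "?g (theta n j) = ?g (f (theta n (?g j)))" by simp
    also have "\<dots> = theta n (?g j)"
      using bij gj theta_in by (simp add: bij_betw_def the_inv_into_f_f)
    finally show ?thesis .
  qed
  then show ?thesis using g_bij by (simp add: signed_perm_def)
qed

lemma transversal_image:
  assumes f: "signed_perm (2*m) f" and I: "transversal m I"
  shows "transversal m (f ` I)"
proof -
  have bij: "bij_betw f {1..2*m} {1..2*m}"
    and comm: "\<And>i. i \<in> {1..2*m} \<Longrightarrow> f (theta (2*m) i) = theta (2*m) (f i)"
    using f by (auto simp: signed_perm_def)
  have I_sub: "I \<subseteq> {1..2*m}" and I_disj: "I \<inter> theta (2*m) ` I = {}"
    using I by (auto simp: transversal_def)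
  have inj: "inj_on f {1..2*m}" using bij by (simp add: bij_betw_def)
  have "x = theta (2*m) y" if "x \<in> I" "y \<in> I" "f x = theta (2*m) (f y)" for x y
  proof (rule inj_onD[OF inj])
    show "f x = f (theta (2*m) y)" using that I_sub comm by auto
    show "x \<in> {1..2*m}" "theta (2*m) y \<in> {1..2*m}" using that I_sub theta_in by auto
  qed
  then have "f ` I \<inter> theta (2*m) ` f ` I = {}" using I_disj by blast
  moreover have "card (f ` I) = m"
    using I card_image[OF inj_on_subset[OF inj I_sub]] by (simp add: transversal_def)
  moreover have "f ` I \<subseteq> {1..2*m}" using I_sub bij_betwE[OF bij] by blast
  ultimately show ?thesis by (simp add: transversal_def)
qed

lemma upper_parity_image:
  assumes f: "signed_perm (2*m) f" and I: "transversal m I"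
  shows "upper_parity m (f ` I) = upper_parity m (f ` {1..m}) * upper_parity m I"
proof -
  define g where "g x = upper_sign m (f x) * upper_sign m x" for x
  have bij: "bij_betw f {1..2*m} {1..2*m}" using f by (simp add: signed_perm_def)
  have inj: "inj_on f J" if "J \<subseteq> {1..2*m}" for J
    using bij that inj_on_subset by (auto simp: bij_betw_def)
  have I_sub: "I \<subseteq> {1..2*m}" using I by (simp add: transversal_def)
  have "g (theta (2*m) x) = g x" if "x \<in> {1..2*m}" for x
    using that f bij_betwE[OF bij] by (simp add: g_def signed_perm_def upper_sign_theta)
  then have "prod g I = prod g {1..m}" using I by (rule prod_transversal)
  also have "\<dots> = upper_parity m (f ` {1..m})"
    using inj[of "{1..m}"] by (simp add: upper_parity_def prod.reindex g_def upper_sign_def)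
  finally have g_prod: "prod g I = upper_parity m (f ` {1..m})" .
  have "upper_parity m (f ` I) = (\<Prod>x\<in>I. upper_sign m (f x))"
    using inj[OF I_sub] by (simp add: upper_parity_def prod.reindex)
  also have "\<dots> = (\<Prod>x\<in>I. g x * upper_sign m x)"
    by (rule prod.cong) (simp_all add: g_def upper_sign_def)
  also have "\<dots> = prod g I * upper_parity m I"
    unfolding upper_parity_def by (rule prod.distrib)
  finally show ?thesis unfolding g_prod .
qed

definition map_inv :: "('a \<rightharpoonup> 'b) \<Rightarrow> ('b \<rightharpoonup> 'a)" where
  "map_inv f = (\<lambda>y. if y \<in> ran f then Some (THE x. f x = Some y) else None)"

lemma map_inv_Some_iff:
  assumes "inj_on f (dom f)"
  shows "map_inv f y = Some x \<longleftrightarrow> f x = Some y"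
proof -
  have "x1 = x2" if "f x1 = Some y" "f x2 = Some y" for x1 x2
    by (rule inj_onD[OF assms]) (use that in auto)
  then have "(THE x. f x = Some y) = x'" if "f x' = Some y" for x'
    using that by (blast intro: the_equality)
  then show ?thesis by (auto simp: map_inv_def ran_def)
qed

lemma dom_map_inv [simp]: "dom (map_inv f) = ran f"
  by (auto simp: map_inv_def split: if_splits)

lemma ran_map_inv: "inj_on f (dom f) \<Longrightarrow> ran (map_inv f) = dom f"
  by (auto simp: ran_def map_inv_Some_iff)

lemma inj_on_map_inv:
  assumes "inj_on f (dom f)"
  shows "inj_on (map_inv f) (dom (map_inv f))"
proof (rule inj_onI)
  fix y y' assume y: "y \<in> dom (map_inv f)" and eq: "map_inv f y = map_inv f y'"
  obtain x where "map_inv f y = Some x" using domD[OF y] by blast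
  with eq have "map_inv f y = Some x" "map_inv f y' = Some x" by simp_all
  then show "y = y'" using assms by (simp add: map_inv_Some_iff)
qed

lemma inj_on_map_comp:
  assumes "inj_on f (dom f)" "inj_on g (dom g)"
  shows "inj_on (f \<circ>\<^sub>m g) (dom (f \<circ>\<^sub>m g))"
proof (rule inj_onI)
  fix x x' assume "x \<in> dom (f \<circ>\<^sub>m g)" "x' \<in> dom (f \<circ>\<^sub>m g)" "(f \<circ>\<^sub>m g) x = (f \<circ>\<^sub>m g) x'"
  then obtain y y' z where yz: "g x = Some y" "g x' = Some y'" "f y = Some z" "f y' = Some z"
    by (auto simp: map_comp_Some_iff)
  then have "y = y'" by (intro inj_onD[OF assms(1)]) auto
  with yz show "x = x'" by (intro inj_onD[OF assms(2)]) auto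
qed

lemma dom_map_comp_subset: "dom (f \<circ>\<^sub>m g) \<subseteq> dom g"
  by (auto simp: map_comp_def split: option.splits)

lemma ran_map_comp_subset: "ran (f \<circ>\<^sub>m g) \<subseteq> ran f"
  by (auto simp: ran_def map_comp_Some_iff)

lemma dom_map_comp_eq: "ran g \<subseteq> dom f \<Longrightarrow> dom (f \<circ>\<^sub>m g) = dom g"
  by (auto simp: map_comp_def ran_def split: option.splits)

lemma ran_map_comp_eq:
  assumes "dom f \<subseteq> ran g"
  shows "ran (f \<circ>\<^sub>m g) = ran f"
proof
  show "ran f \<subseteq> ran (f \<circ>\<^sub>m g)"
  proof
    fix z assume "z \<in> ran f"
    then obtain y where y: "f y = Some z" by (auto simp: ran_def)
    then obtain x where "g x = Some y" using assms by (auto simp: ran_def)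
    then have "(f \<circ>\<^sub>m g) x = Some z" using y by simp
    then show "z \<in> ran (f \<circ>\<^sub>m g)" by (rule ranI)
  qed
qed (rule ran_map_comp_subset)

lemma map_comp_assoc: "(f \<circ>\<^sub>m g) \<circ>\<^sub>m h = f \<circ>\<^sub>m (g \<circ>\<^sub>m h)"
  by (rule ext) (simp add: map_comp_def split: option.splits)

lemma map_comp_map_inv_cancel_right:
  assumes "inj_on g (dom g)" "dom f \<subseteq> dom g"
  shows "(f \<circ>\<^sub>m map_inv g) \<circ>\<^sub>m g = f"
proof
  fix x show "((f \<circ>\<^sub>m map_inv g) \<circ>\<^sub>m g) x = f x"
  proof (cases "g x")
    case None
    then have "x \<notin> dom f" using assms(2) by auto
    then show ?thesis using None by (simp add: domIff)
  next
    case (Some y)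
    then have "map_inv g y = Some x" using map_inv_Some_iff[OF assms(1)] by simp
    then show ?thesis using Some by simp
  qed
qed

lemma map_comp_map_inv_cancel_left:
  assumes "inj_on g (dom g)" "ran f \<subseteq> ran g"
  shows "g \<circ>\<^sub>m (map_inv g \<circ>\<^sub>m f) = f"
proof
  fix x show "(g \<circ>\<^sub>m (map_inv g \<circ>\<^sub>m f)) x = f x"
  proof (cases "f x")
    case (Some y)
    then obtain x' where "g x' = Some y" using assms(2) by (auto simp: ran_def)
    then have "map_inv g y = Some x'" using map_inv_Some_iff[OF assms(1)] by simp
    then show ?thesis using Some \<open>g x' = Some y\<close> by simp
  qed simp
qed

lemma ran_eq_image_the: "ran f = (\<lambda>x. the (f x)) ` dom f"
  by (force simp: ran_def)

lemma inj_on_the_dom: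
  assumes "inj_on f (dom f)"
  shows "inj_on (\<lambda>x. the (f x)) (dom f)"
proof (rule inj_onI)
  fix x x' assume "x \<in> dom f" "x' \<in> dom f" "the (f x) = the (f x')"
  then have "f x = f x'" by (auto simp: dom_def)
  then show "x = x'" using inj_onD[OF assms] \<open>x \<in> dom f\<close> \<open>x' \<in> dom f\<close> by blast
qed

lemma card_ran: "inj_on f (dom f) \<Longrightarrow> card (ran f) = card (dom f)"
  by (simp add: ran_eq_image_the card_image inj_on_the_dom)

lemma rk_map_comp_le_right: "finite (dom g) \<Longrightarrow> rk (f \<circ>\<^sub>m g) \<le> rk g"
  unfolding rk_def by (rule card_mono[OF _ dom_map_comp_subset])

lemma rk_map_comp_le_left:
  assumes "finite (dom f)" "inj_on g (dom g)"
  shows "rk (f \<circ>\<^sub>m g) \<le> rk f"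
proof -
  have "inj_on (\<lambda>x. the (g x)) (dom (f \<circ>\<^sub>m g))"
    using inj_on_the_dom[OF assms(2)] dom_map_comp_subset by (rule inj_on_subset)
  moreover have "(\<lambda>x. the (g x)) ` dom (f \<circ>\<^sub>m g) \<subseteq> dom f"
    by (auto simp: map_comp_def split: option.splits)
  ultimately show ?thesis unfolding rk_def by (rule card_inj_on_le[OF _ _ assms(1)])
qed

lemma finite_dom_pinj: "pinj n f \<Longrightarrow> finite (dom f)"
  unfolding pinj_def using finite_subset by blast

lemma pinj_map_comp:
  assumes "pinj n f" "pinj n g"
  shows "pinj n (f \<circ>\<^sub>m g)"
proof -
  have "dom (f \<circ>\<^sub>m g) \<subseteq> {1..n}"
    by (rule order_trans[OF dom_map_comp_subset]) (use assms(2) in \<open>simp add: pinj_def\<close>)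
  moreover have "ran (f \<circ>\<^sub>m g) \<subseteq> {1..n}"
    by (rule order_trans[OF ran_map_comp_subset]) (use assms(1) in \<open>simp add: pinj_def\<close>)
  moreover have "inj_on (f \<circ>\<^sub>m g) (dom (f \<circ>\<^sub>m g))"
    using assms by (intro inj_on_map_comp) (simp_all add: pinj_def)
  ultimately show ?thesis by (simp add: pinj_def)
qed

lemma pinj_map_inv: "pinj n f \<Longrightarrow> pinj n (map_inv f)"
  unfolding pinj_def using inj_on_map_inv[of f] by (simp add: ran_map_inv)

lemma ran_restrict_Some_comp [simp]: "ran ((Some \<circ> f) |` A) = f ` A"
  by (auto simp: ran_def restrict_map_def split: if_splits)

lemma dom_Some_comp [simp]: "dom (Some \<circ> f) = UNIV"
  by (simp add: dom_def)

lemma inj_on_restrict_Some_comp [simp]: "inj_on ((Some \<circ> f) |` A) A \<longleftrightarrow> inj_on f A"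
  unfolding inj_on_def by simp

lemma restrict_Some_comp_eq:
  assumes "dom w = A"
  shows "w = (Some \<circ> (\<lambda>x. the (w x))) |` A"
proof
  fix x show "w x = ((Some \<circ> (\<lambda>x. the (w x))) |` A) x"
    using assms by (cases "x \<in> A") auto
qed

lemma map_comp_restrict_Some_comp:
  assumes "g ` A \<subseteq> A"
  shows "((Some \<circ> f) |` A) \<circ>\<^sub>m ((Some \<circ> g) |` A) = (Some \<circ> (f \<circ> g)) |` A"
proof
  fix x show "(((Some \<circ> f) |` A) \<circ>\<^sub>m ((Some \<circ> g) |` A)) x = ((Some \<circ> (f \<circ> g)) |` A) x"
    using assms by (cases "x \<in> A") auto
qed

lemma map_inv_restrict_Some_comp:
  assumes "bij_betw f A A"
  shows "map_inv ((Some \<circ> f) |` A) = (Some \<circ> the_inv_into A f) |` A"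
proof
  fix y
  have inj: "inj_on ((Some \<circ> f) |` A) (dom ((Some \<circ> f) |` A))"
    using assms by (simp add: bij_betw_def)
  show "map_inv ((Some \<circ> f) |` A) y = ((Some \<circ> the_inv_into A f) |` A) y"
  proof (cases "y \<in> A")
    case True
    have "the_inv_into A f y \<in> A"
      using bij_betwE[OF bij_betw_the_inv_into[OF assms]] True by blast
    moreover have "f (the_inv_into A f y) = y"
      using f_the_inv_into_f_bij_betw[OF assms] True by simp
    ultimately show ?thesis using True by (simp add: map_inv_Some_iff[OF inj])
  next
    case False
    then have "y \<notin> ran ((Some \<circ> f) |` A)"
      using assms by (simp add: bij_betw_def)
    then show ?thesis using False by (simp add: map_inv_def)
  qed
qed

lemma Wgrp_iff: "w \<in> Wgrp n \<longleftrightarrow> (\<exists>f. signed_perm n f \<and> w = (Some \<circ> f) |` {1..n})"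
proof
  assume w: "w \<in> Wgrp n"
  define f where "f x = the (w x)" for x
  have dom: "dom w = {1..n}" and ran: "ran w = {1..n}" and inj: "inj_on w (dom w)"
    and comm: "\<And>i. i \<in> {1..n} \<Longrightarrow> w (theta n i) = map_option (theta n) (w i)"
    using w by (auto simp: Wgrp_def pinj_def)
  have w_eq: "w = (Some \<circ> f) |` {1..n}"
    unfolding f_def by (rule restrict_Some_comp_eq[OF dom])
  have "bij_betw f {1..n} {1..n}"
    using inj ran by (simp add: w_eq bij_betw_def)
  moreover have "f (theta n i) = theta n (f i)" if "i \<in> {1..n}" for i
    using comm[OF that] that theta_in[OF that] by (simp add: w_eq)
  ultimately show "\<exists>f. signed_perm n f \<and> w = (Some \<circ> f) |` {1..n}"
    using w_eq by (auto simp: signed_perm_def)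
next
  assume "\<exists>f. signed_perm n f \<and> w = (Some \<circ> f) |` {1..n}"
  then obtain f where f: "signed_perm n f" and w_eq: "w = (Some \<circ> f) |` {1..n}" by blast
  have bij: "bij_betw f {1..n} {1..n}" using f by (simp add: signed_perm_def)
  have "w (theta n i) = map_option (theta n) (w i)" if "i \<in> {1..n}" for i
    using f that theta_in[OF that] by (simp add: w_eq signed_perm_def)
  then show "w \<in> Wgrp n"
    using bij by (simp add: Wgrp_def pinj_def w_eq bij_betw_def)
qed

lemma Wprime_iff:
  "w \<in> Wprime (2*m) \<longleftrightarrow>
     (\<exists>f. signed_perm (2*m) f \<and> upper_parity m (f ` {1..m}) = 1 \<and> w = (Some \<circ> f) |` {1..2*m})"
proof -
  have "even (card (f ` {1..m} \<inter> {m+1..2*m})) \<longleftrightarrow> upper_parity m (f ` {1..m}) = 1"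
    if f: "signed_perm (2*m) f" for f
  proof -
    have "f ` {1..m} \<subseteq> {1..2*m}"
      using f bij_betwE by (fastforce simp: signed_perm_def)
    then have "f ` {1..m} \<inter> {m+1..2*m} = {x \<in> f ` {1..m}. m < x}" by auto
    then show ?thesis by (simp add: upper_parity_eq_1_iff)
  qed
  moreover have "(\<lambda>i. the (((Some \<circ> f) |` {1..2*m}) i)) ` {1..m} = f ` {1..m}" for f
    by (auto simp: image_def)
  ultimately show ?thesis by (auto simp: Wprime_def Wgrp_iff)
qed

lemma Wprime_dom_ran: "w \<in> Wprime n \<Longrightarrow> dom w = {1..n} \<and> ran w = {1..n}"
  by (simp add: Wprime_def Wgrp_def)

lemma upper_parity_image_comp:
  assumes f: "signed_perm (2*m) f" and g: "signed_perm (2*m) g"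
  shows "upper_parity m ((f \<circ> g) ` {1..m}) = upper_parity m (f ` {1..m}) * upper_parity m (g ` {1..m})"
  using upper_parity_image[OF f transversal_image[OF g transversal_lower_half]]
  by (simp add: image_comp)

lemma Wprime_map_comp:
  assumes "x \<in> Wprime (2*m)" "y \<in> Wprime (2*m)"
  shows "x \<circ>\<^sub>m y \<in> Wprime (2*m)"
proof -
  obtain f g where f: "signed_perm (2*m) f" "upper_parity m (f ` {1..m}) = 1"
    and g: "signed_perm (2*m) g" "upper_parity m (g ` {1..m}) = 1"
    and xy: "x = (Some \<circ> f) |` {1..2*m}" "y = (Some \<circ> g) |` {1..2*m}"
    using assms by (auto simp: Wprime_iff)
  have "g ` {1..2*m} \<subseteq> {1..2*m}" using g(1) bij_betwE by (fastforce simp: signed_perm_def)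
  then have "x \<circ>\<^sub>m y = (Some \<circ> (f \<circ> g)) |` {1..2*m}"
    unfolding xy by (rule map_comp_restrict_Some_comp)
  moreover have "upper_parity m ((f \<circ> g) ` {1..m}) = 1"
    using upper_parity_image_comp[OF f(1) g(1)] f(2) g(2) by simp
  ultimately show ?thesis using signed_perm_comp[OF f(1) g(1)] by (auto simp: Wprime_iff)
qed

lemma Wprime_map_inv:
  assumes "y \<in> Wprime (2*m)"
  shows "map_inv y \<in> Wprime (2*m)"
proof -
  obtain g where g: "signed_perm (2*m) g" "upper_parity m (g ` {1..m}) = 1"
    and y: "y = (Some \<circ> g) |` {1..2*m}"
    using assms by (auto simp: Wprime_iff)
  let ?h = "the_inv_into {1..2*m} g"
  have bij: "bij_betw g {1..2*m} {1..2*m}" using g(1) by (simp add: signed_perm_def)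
  have h: "signed_perm (2*m) ?h" using g(1) by (rule signed_perm_inv)
  have "(g \<circ> ?h) ` {1..m} = {1..m}"
    using f_the_inv_into_f_bij_betw[OF bij] by (force simp: image_def)
  then have "upper_parity m (?h ` {1..m}) = 1"
    using upper_parity_image_comp[OF g(1) h] g(2) upper_parity_lower_half[of m] by simp
  moreover have "map_inv y = (Some \<circ> ?h) |` {1..2*m}"
    unfolding y by (rule map_inv_restrict_Some_comp[OF bij])
  ultimately show ?thesis using h unfolding Wprime_iff by blast
qed

lemma ORn_iff:
  "\<sigma> \<in> ORn (2*m) \<longleftrightarrow>
     pinj (2*m) \<sigma> \<and> admissible (2*m) (dom \<sigma>) \<and> admissible (2*m) (ran \<sigma>) \<and>
     (rk \<sigma> = m \<longrightarrow> (typeI (2*m) (dom \<sigma>) \<longleftrightarrow> typeI (2*m) (ran \<sigma>))) \<and>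
     (m < rk \<sigma> \<longrightarrow> \<sigma> \<in> Wprime (2*m))"
proof -
  have "admissible (2*m) (dom \<sigma>) \<and> admissible (2*m) (ran \<sigma>) \<and> dom \<sigma> = ran \<sigma>"
    if "\<sigma> \<in> Wprime (2*m)"
    using Wprime_dom_ran[OF that] by (simp add: admissible_def)
  then show ?thesis
    unfolding ORn_def Idom_def Jim_def by (cases "rk \<sigma>" m rule: linorder_cases) auto
qed

lemma greenL_map_comp_dom_eq:
  assumes "greenL M (\<circ>\<^sub>m) x y"
  shows "dom x = dom y"
proof -
  obtain a b where "x = a \<circ>\<^sub>m y" "y = b \<circ>\<^sub>m x" using assms by (auto simp: greenL_def)
  then show ?thesis using dom_map_comp_subset[of a y] dom_map_comp_subset[of b x] by auto
qed

lemma greenR_map_comp_ran_eq: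
  assumes "greenR M (\<circ>\<^sub>m) x y"
  shows "ran x = ran y"
proof -
  obtain a b where "x = y \<circ>\<^sub>m a" "y = x \<circ>\<^sub>m b" using assms by (auto simp: greenR_def)
  then show ?thesis using ran_map_comp_subset[of y a] ran_map_comp_subset[of x b] by auto
qed

lemma ORn_left_factor:
  assumes x: "x \<in> ORn (2*m)" and y: "y \<in> ORn (2*m)" and dom_eq: "dom x = dom y"
  shows "x \<circ>\<^sub>m map_inv y \<in> ORn (2*m)"
proof -
  let ?a = "x \<circ>\<^sub>m map_inv y"
  have px: "pinj (2*m) x" and py: "pinj (2*m) y" using x y by (simp_all add: ORn_iff)
  then have inj_y: "inj_on y (dom y)" by (simp add: pinj_def)
  have dom_a: "dom ?a = ran y"
    using dom_map_comp_eq[of "map_inv y" x] ran_map_inv[OF inj_y] dom_eq by simp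
  have ran_a: "ran ?a = ran x"
    using ran_map_comp_eq[of x "map_inv y"] ran_map_inv[OF inj_y] dom_eq by simp
  have rk_x: "rk x = rk y" using dom_eq by (simp add: rk_def)
  have rk_a: "rk ?a = rk y" using dom_a card_ran[OF inj_y] by (simp add: rk_def)
  have "?a \<in> Wprime (2*m)" if "m < rk ?a"
    using that x y rk_a rk_x by (simp add: ORn_iff Wprime_map_comp Wprime_map_inv)
  then show ?thesis
    using x y pinj_map_comp[OF px pinj_map_inv[OF py]] dom_a ran_a rk_a rk_x dom_eq
    by (simp add: ORn_iff)
qed

lemma ORn_right_factor:
  assumes x: "x \<in> ORn (2*m)" and y: "y \<in> ORn (2*m)" and ran_eq: "ran x = ran y"
  shows "map_inv y \<circ>\<^sub>m x \<in> ORn (2*m)"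
proof -
  let ?a = "map_inv y \<circ>\<^sub>m x"
  have px: "pinj (2*m) x" and py: "pinj (2*m) y" using x y by (simp_all add: ORn_iff)
  then have inj_x: "inj_on x (dom x)" and inj_y: "inj_on y (dom y)" by (simp_all add: pinj_def)
  have dom_a: "dom ?a = dom x"
    using dom_map_comp_eq[of x "map_inv y"] ran_eq by simp
  have ran_a: "ran ?a = dom y"
    using ran_map_comp_eq[of "map_inv y" x] ran_map_inv[OF inj_y] ran_eq by simp
  have rk_x: "rk x = rk y" using ran_eq card_ran[OF inj_x] card_ran[OF inj_y] by (simp add: rk_def)
  have rk_a: "rk ?a = rk x" using dom_a by (simp add: rk_def)
  have "?a \<in> Wprime (2*m)" if "m < rk ?a"
    using that x y rk_a rk_x by (simp add: ORn_iff Wprime_map_comp Wprime_map_inv)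
  then show ?thesis
    using x y pinj_map_comp[OF pinj_map_inv[OF py] px] dom_a ran_a rk_a rk_x ran_eq
    by (simp add: ORn_iff)
qed

lemma greenL_ORn_iff:
  "greenL (ORn (2*m)) (\<circ>\<^sub>m) x y \<longleftrightarrow> x \<in> ORn (2*m) \<and> y \<in> ORn (2*m) \<and> dom x = dom y"
proof
  assume L: "greenL (ORn (2*m)) (\<circ>\<^sub>m) x y"
  then show "x \<in> ORn (2*m) \<and> y \<in> ORn (2*m) \<and> dom x = dom y"
    using greenL_map_comp_dom_eq[OF L] unfolding greenL_def by blast
next
  assume xy: "x \<in> ORn (2*m) \<and> y \<in> ORn (2*m) \<and> dom x = dom y"
  then have "pinj (2*m) x" "pinj (2*m) y" by (simp_all add: ORn_iff)
  then have "inj_on x (dom x)" "inj_on y (dom y)" by (simp_all add: pinj_def)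
  then have "(x \<circ>\<^sub>m map_inv y) \<circ>\<^sub>m y = x" "(y \<circ>\<^sub>m map_inv x) \<circ>\<^sub>m x = y"
    using xy by (simp_all add: map_comp_map_inv_cancel_right)
  then show "greenL (ORn (2*m)) (\<circ>\<^sub>m) x y"
    using xy ORn_left_factor[of x m y] ORn_left_factor[of y m x] unfolding greenL_def by metis
qed

lemma greenR_ORn_iff:
  "greenR (ORn (2*m)) (\<circ>\<^sub>m) x y \<longleftrightarrow> x \<in> ORn (2*m) \<and> y \<in> ORn (2*m) \<and> ran x = ran y"
proof
  assume R: "greenR (ORn (2*m)) (\<circ>\<^sub>m) x y"
  then show "x \<in> ORn (2*m) \<and> y \<in> ORn (2*m) \<and> ran x = ran y"
    using greenR_map_comp_ran_eq[OF R] unfolding greenR_def by blast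
next
  assume xy: "x \<in> ORn (2*m) \<and> y \<in> ORn (2*m) \<and> ran x = ran y"
  then have "pinj (2*m) x" "pinj (2*m) y" by (simp_all add: ORn_iff)
  then have "inj_on x (dom x)" "inj_on y (dom y)" by (simp_all add: pinj_def)
  then have "y \<circ>\<^sub>m (map_inv y \<circ>\<^sub>m x) = x" "x \<circ>\<^sub>m (map_inv x \<circ>\<^sub>m y) = y"
    using xy by (simp_all add: map_comp_map_inv_cancel_left)
  then show "greenR (ORn (2*m)) (\<circ>\<^sub>m) x y"
    using xy ORn_right_factor[of x m y] ORn_right_factor[of y m x] unfolding greenR_def by metis
qed

lemma rk_two_sided_le:
  assumes "pinj n y" "pinj n b"
  shows "rk ((a \<circ>\<^sub>m y) \<circ>\<^sub>m b) \<le> rk y"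
proof -
  have fin: "finite (dom y)" using assms(1) by (rule finite_dom_pinj)
  have "finite (dom (a \<circ>\<^sub>m y))" using dom_map_comp_subset fin by (rule finite_subset)
  moreover have "inj_on b (dom b)" using assms(2) by (simp add: pinj_def)
  ultimately have "rk ((a \<circ>\<^sub>m y) \<circ>\<^sub>m b) \<le> rk (a \<circ>\<^sub>m y)" by (rule rk_map_comp_le_left)
  also have "\<dots> \<le> rk y" using fin by (rule rk_map_comp_le_right)
  finally show ?thesis .
qed

lemma typeI_image_ORn:
  assumes b: "b \<in> ORn (2*m)" and I: "admissible (2*m) I" "card I = m" "I \<subseteq> dom b"
  shows "typeI (2*m) ((\<lambda>x. the (b x)) ` I) \<longleftrightarrow> typeI (2*m) I"
proof -
  have "pinj (2*m) b" using b by (simp add: ORn_iff)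
  then have fin: "finite (dom b)" by (rule finite_dom_pinj)
  have card_le: "m \<le> rk b" using card_mono[OF fin I(3)] I(2) by (simp add: rk_def)
  show ?thesis
  proof (cases "rk b = m")
    case True
    then have "I = dom b" using card_subset_eq[OF fin I(3)] I(2) by (simp add: rk_def)
    then have "(\<lambda>x. the (b x)) ` I = ran b" by (simp add: ran_eq_image_the)
    then show ?thesis using b True \<open>I = dom b\<close> by (simp add: ORn_iff)
  next
    case False
    then have "b \<in> Wprime (2*m)" using b card_le by (simp add: ORn_iff)
    then obtain f where f: "signed_perm (2*m) f" "upper_parity m (f ` {1..m}) = 1"
      and b_eq: "b = (Some \<circ> f) |` {1..2*m}"
      by (auto simp: Wprime_iff)
    have I_sub: "I \<subseteq> {1..2*m}" using I(3) b_eq by simp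
    then have "(\<lambda>x. the (b x)) ` I = f ` I" unfolding b_eq by (intro image_cong) auto
    moreover have "upper_parity m (f ` I) = upper_parity m I"
      using upper_parity_image[OF f(1) admissible_transversal[OF I(1,2)]] f(2) by simp
    moreover have "finite I" using I_sub finite_subset by blast
    ultimately show ?thesis by (simp add: typeI_iff_upper_parity)
  qed
qed

lemma typeI_dom_two_sided:
  assumes x_eq: "x = (a \<circ>\<^sub>m y) \<circ>\<^sub>m b"
    and x: "x \<in> ORn (2*m)" and y: "y \<in> ORn (2*m)" and b: "b \<in> ORn (2*m)"
    and rk: "rk x = m" "rk y = m"
  shows "typeI (2*m) (dom x) \<longleftrightarrow> typeI (2*m) (dom y)"
proof -
  let ?b = "\<lambda>i. the (b i)"
  have dom_x: "dom x \<subseteq> dom b" unfolding x_eq by (rule dom_map_comp_subset)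
  have "?b i \<in> dom (a \<circ>\<^sub>m y)" if i: "i \<in> dom x" for i
  proof -
    obtain z where "x i = Some z" using i by blast
    then obtain j where "b i = Some j" "(a \<circ>\<^sub>m y) j = Some z"
      unfolding x_eq by (auto simp: map_comp_Some_iff)
    then show ?thesis by auto
  qed
  then have sub: "?b ` dom x \<subseteq> dom y" using dom_map_comp_subset[of a y] by blast
  have "inj_on b (dom b)" using b by (simp add: ORn_iff pinj_def)
  then have "inj_on ?b (dom b)" by (rule inj_on_the_dom)
  then have "inj_on ?b (dom x)" using dom_x by (rule inj_on_subset)
  then have "card (?b ` dom x) = card (dom y)" using rk by (simp add: card_image rk_def)
  moreover have "finite (dom y)" using y finite_dom_pinj by (auto simp: ORn_iff)
  ultimately have "?b ` dom x = dom y" using card_subset_eq[OF _ sub] by simp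
  moreover have "admissible (2*m) (dom x)" "card (dom x) = m" using x rk by (simp_all add: ORn_iff rk_def)
  ultimately show ?thesis using typeI_image_ORn[OF b _ _ dom_x] by simp
qed

lemma greenJ_ORnD:
  assumes "greenJ (ORn (2*m)) (\<circ>\<^sub>m) x y"
  shows "rk x = rk y \<and> (rk y = m \<longrightarrow> tp (2*m) x = tp (2*m) y)"
proof -
  obtain a b c d where in_ORn: "x \<in> ORn (2*m)" "y \<in> ORn (2*m)" "b \<in> ORn (2*m)" "d \<in> ORn (2*m)"
    and x_eq: "x = (a \<circ>\<^sub>m y) \<circ>\<^sub>m b" and y_eq: "y = (c \<circ>\<^sub>m x) \<circ>\<^sub>m d"
    using assms unfolding greenJ_def by blast
  have pinj: "pinj (2*m) x" "pinj (2*m) y" "pinj (2*m) b" "pinj (2*m) d"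
    using in_ORn by (simp_all add: ORn_iff)
  have "rk x \<le> rk y" using rk_two_sided_le[OF pinj(2,3), of a] unfolding x_eq[symmetric] .
  moreover have "rk y \<le> rk x" using rk_two_sided_le[OF pinj(1,4), of c] unfolding y_eq[symmetric] .
  ultimately have "rk x = rk y" by simp
  moreover have "tp (2*m) x = tp (2*m) y" if "rk y = m"
    using typeI_dom_two_sided[OF x_eq in_ORn(1,2,3)] that \<open>rk x = rk y\<close>
    by (simp add: tp_def Idom_def)
  ultimately show ?thesis by blast
qed

lemma greenD_imp_greenJ:
  assumes assoc: "\<And>a b c. mult (mult a b) c = mult a (mult b c)"
    and D: "greenD M mult x y"
  shows "greenJ M mult x y"
proof -
  obtain z where "greenL M mult x z" "greenR M mult z y" using D by (auto simp: greenD_def)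
  then obtain a b c d where mem: "x \<in> M" "y \<in> M" "a \<in> M" "b \<in> M" "c \<in> M" "d \<in> M"
    and x_eq: "x = mult a z" and z_eq: "z = mult b x" "z = mult y c" and y_eq: "y = mult z d"
    unfolding greenL_def greenR_def by blast
  have "x = mult (mult a y) c" unfolding x_eq z_eq(2) assoc ..
  moreover have "y = mult (mult b x) d" using y_eq unfolding z_eq(1) .
  ultimately show ?thesis unfolding greenJ_def using mem by blast
qed

lemma greenD_ORnI:
  assumes x: "x \<in> ORn (2*m)" and y: "y \<in> ORn (2*m)"
    and rk: "rk x = rk y" and tp: "rk y = m \<longrightarrow> tp (2*m) x = tp (2*m) y"
  shows "greenD (ORn (2*m)) (\<circ>\<^sub>m) x y"
proof -
  obtain z where z: "z \<in> ORn (2*m)" "dom z = dom x" "ran z = ran y"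
  proof (cases "m < rk y")
    case True
    then have "x \<in> Wprime (2*m)" "y \<in> Wprime (2*m)" using x y rk by (simp_all add: ORn_iff)
    then have "dom y = dom x" using Wprime_dom_ran by blast
    then show ?thesis using that y by blast
  next
    case False
    have px: "pinj (2*m) x" and py: "pinj (2*m) y" using x y by (simp_all add: ORn_iff)
    have "card (ran y) = card (dom y)" using py by (simp add: pinj_def card_ran)
    then have "card (dom x) = card (ran y)" using rk by (simp add: rk_def)
    moreover have "finite (ran y)" using py finite_subset by (auto simp: pinj_def)
    ultimately obtain h where h: "bij_betw h (dom x) (ran y)"
      using finite_same_card_bij[OF finite_dom_pinj[OF px]] by blast
    define z where "z = (Some \<circ> h) |` dom x"
    have dom_z: "dom z = dom x" and ran_z: "ran z = ran y"
      using h by (simp_all add: z_def bij_betw_def)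
    have "pinj (2*m) z" using px py h by (simp add: z_def pinj_def bij_betw_def)
    moreover have "rk z = rk x" using dom_z by (simp add: rk_def)
    ultimately have "z \<in> ORn (2*m)"
      using x y dom_z ran_z rk tp False by (auto simp: ORn_iff tp_def Idom_def)
    then show ?thesis using that dom_z ran_z by blast
  qed
  then have "greenL (ORn (2*m)) (\<circ>\<^sub>m) x z" "greenR (ORn (2*m)) (\<circ>\<^sub>m) z y"
    using x y by (simp_all add: greenL_ORn_iff greenR_ORn_iff)
  then show ?thesis unfolding greenD_def by blast
qed

lemma greenJ_ORn_iff:
  "greenJ (ORn (2*m)) (\<circ>\<^sub>m) x y \<longleftrightarrow>
     x \<in> ORn (2*m) \<and> y \<in> ORn (2*m) \<and> rk x = rk y \<and> (rk y = m \<longrightarrow> tp (2*m) x = tp (2*m) y)"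
proof
  assume J: "greenJ (ORn (2*m)) (\<circ>\<^sub>m) x y"
  then have "x \<in> ORn (2*m)" "y \<in> ORn (2*m)" unfolding greenJ_def by blast+
  then show "x \<in> ORn (2*m) \<and> y \<in> ORn (2*m) \<and> rk x = rk y \<and> (rk y = m \<longrightarrow> tp (2*m) x = tp (2*m) y)"
    using greenJ_ORnD[OF J] by blast
next
  assume "x \<in> ORn (2*m) \<and> y \<in> ORn (2*m) \<and> rk x = rk y \<and> (rk y = m \<longrightarrow> tp (2*m) x = tp (2*m) y)"
  then show "greenJ (ORn (2*m)) (\<circ>\<^sub>m) x y"
    by (intro greenD_imp_greenJ[where mult = "(\<circ>\<^sub>m)", OF map_comp_assoc] greenD_ORnI) auto
qed

lemma greenD_ORn_iff: "greenD (ORn (2*m)) (\<circ>\<^sub>m) x y \<longleftrightarrow> greenJ (ORn (2*m)) (\<circ>\<^sub>m) x y"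
proof
  assume "greenJ (ORn (2*m)) (\<circ>\<^sub>m) x y"
  then show "greenD (ORn (2*m)) (\<circ>\<^sub>m) x y"
    unfolding greenJ_ORn_iff by (intro greenD_ORnI) auto
qed (rule greenD_imp_greenJ[where mult = "(\<circ>\<^sub>m)", OF map_comp_assoc])

theorem proposition3p3:
  fixes m n :: nat and \<sigma> :: "nat \<rightharpoonup> nat"
  assumes "m \<ge> 1" and "n = 2 * m" and "\<sigma> \<in> ORn n"
  shows "(green_class (greenL (ORn n) (\<circ>\<^sub>m)) \<sigma> = {\<tau> \<in> ORn n. Idom \<tau> = Idom \<sigma>}) \<and>
      (green_class (greenR (ORn n) (\<circ>\<^sub>m)) \<sigma> = {\<tau> \<in> ORn n. Jim \<tau> = Jim \<sigma>}) \<and>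
      (green_class (greenH (ORn n) (\<circ>\<^sub>m)) \<sigma> =
           {\<tau> \<in> ORn n. Idom \<tau> = Idom \<sigma> \<and> Jim \<tau> = Jim \<sigma>}) \<and>
      (green_class (greenJ (ORn n) (\<circ>\<^sub>m)) \<sigma> =
           {\<tau> \<in> ORn n. rk \<tau> = rk \<sigma> \<and> (rk \<sigma> = m \<longrightarrow> tp n \<tau> = tp n \<sigma>)}) \<and>
      (green_class (greenD (ORn n) (\<circ>\<^sub>m)) \<sigma> = green_class (greenJ (ORn n) (\<circ>\<^sub>m)) \<sigma>)"
  using assms(3) unfolding assms(2)
  by (auto simp: green_class_def greenH_def greenL_ORn_iff greenR_ORn_iff greenJ_ORn_iff
      greenD_ORn_iff Idom_def Jim_def)

end
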